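(* Let $\gamma$ be a gauge on $\mathbb{R}^d$ with skewness $\sigma$, and let $v\in\mathbb{R}^d$ with $\gamma(v)=1$. Then $v\in \mathrm{SD}_\gamma$ if and only if $-\frac{1}{\sigma}\,\partial\gamma(v)\subseteq\partial\gamma(-v)$.
   Context: A gauge $\gamma$ on $\mathbb{R}^d$ is the Minkowski functional of a convex compact set $B_\gamma=\{x:\gamma(x)\le 1\}$ having the origin in its interior; it is positive except at $0$, positively homogeneous, and subadditive, but not necessarily symmetric. The dual gauge is $\gamma^\circ(p)=\max\{\langle p,x\rangle:\gamma(x)=1\}$, with unit ball $B_{\gamma^\circ}$ and boundary $\partial B_{\gamma^\circ}=\{p:\gamma^\circ(p)=1\}$. For $x\neq 0$, the subdifferential is $\partial\gamma(x)=\{p\in\partial B_{\gamma^\circ}:\langle p,x\rangle=\gamma(x)\}$ (and $\partial\gamma(0)=B_{\gamma^\circ}$). The skewness of $\gamma$ is $\sigma=\sup_{x\neq 0}\gamma(x)/\gamma(-x)$ (so $\sigma\ge 1$, with equality iff $\gamma$ is a norm). The set of skewness directions is $\mathrm{SD}_\gamma=\{v\in\mathbb{R}^d:\gamma(v)=\sigma\,\gamma(-v)=1\}$. *)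

theory Defs
  imports "HOL-Analysis.Analysis"
begin

definition minkowski_functional :: "'a::euclidean_space set \<Rightarrow> 'a \<Rightarrow> real" where
  "minkowski_functional B x = Inf {t. t > 0 \<and> x \<in> (\<lambda>y. t *\<^sub>R y) ` B}"

definition is_gauge :: "('a::euclidean_space \<Rightarrow> real) \<Rightarrow> bool" where
  "is_gauge g \<longleftrightarrow> (\<exists>B. convex B \<and> compact B \<and> 0 \<in> interior B \<and> g = minkowski_functional B)"

definition dual_gauge :: "('a::euclidean_space \<Rightarrow> real) \<Rightarrow> 'a \<Rightarrow> real" where
  "dual_gauge g p = Sup {p \<bullet> x | x. g x = 1}"

definition gauge_subdiff :: "('a::euclidean_space \<Rightarrow> real) \<Rightarrow> 'a \<Rightarrow> 'a set" where
  "gauge_subdiff g x =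
     (if x = 0 then {p. dual_gauge g p \<le> 1}
      else {p. dual_gauge g p = 1 \<and> p \<bullet> x = g x})"

definition skewness :: "('a::euclidean_space \<Rightarrow> real) \<Rightarrow> real" where
  "skewness g = Sup {g x / g (- x) | x. x \<noteq> 0}"

definition skew_dirs :: "('a::euclidean_space \<Rightarrow> real) \<Rightarrow> 'a set" where
  "skew_dirs g = {v. g v = skewness g * g (- v) \<and> skewness g * g (- v) = 1}"

end

theory Submission
  imports Defs
begin

text \<open>Every unit subgradient \<open>p\<close> of \<open>\<gamma>\<close> satisfies \<open>\<langle>p, x\<rangle> \<le> \<gamma>(x)\<close>, and the skewness bound
  \<open>\<gamma>(-x) \<le> \<sigma> \<gamma>(x)\<close> turns this into \<open>\<langle>-p/\<sigma>, x\<rangle> \<le> \<gamma>(x)\<close>; so \<open>-p/\<sigma>\<close> has dual gauge at most 1,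
  and it lies in \<open>\<partial>\<gamma>(-v)\<close> exactly when \<open>\<langle>-p/\<sigma>, -v\<rangle> = 1/\<sigma>\<close> equals \<open>\<gamma>(-v)\<close>, i.e. when
  \<open>\<sigma> \<gamma>(-v) = 1\<close>. Since \<open>\<partial>\<gamma>(v)\<close> is nonempty (a supporting hyperplane of the unit ball at \<open>v\<close>),
  the inclusion forces this equation, and conversely the equation gives the inclusion.\<close>

locale minkowski_gauge =
  fixes B :: "'a::euclidean_space set" and g :: "'a \<Rightarrow> real"
  assumes convex: "convex B" and compact: "compact B" and zero_in_interior: "0 \<in> interior B"
    and gauge_eq: "g = minkowski_functional B"
begin

lemma gauge_eq_Inf: "g x = Inf {t. 0 < t \<and> (1 / t) *\<^sub>R x \<in> B}"
proof -
  have "x \<in> (\<lambda>y. t *\<^sub>R y) ` B \<longleftrightarrow> (1 / t) *\<^sub>R x \<in> B" if "0 < t" for t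
    using that by (auto intro!: image_eqI[of x _ "(1 / t) *\<^sub>R x"])
  then show ?thesis
    unfolding gauge_eq minkowski_functional_def
    by (intro arg_cong[where f = Inf] Collect_cong) blast
qed

lemma gauge_defining_set_nonempty: "{t. 0 < t \<and> (1 / t) *\<^sub>R x \<in> B} \<noteq> {}"
proof -
  obtain r where r: "0 < r" "cball 0 r \<subseteq> B"
    using zero_in_interior mem_interior_cball by blast
  define t where "t = norm x / r + 1"
  have "0 < t" using r by (simp add: t_def add_nonneg_pos)
  moreover have "norm x \<le> r * t" using r by (simp add: t_def algebra_simps)
  then have "(1 / t) *\<^sub>R x \<in> cball 0 r"
    using \<open>0 < t\<close> by (simp add: divide_le_eq mult.commute)
  ultimately show ?thesis using r by blast
qed

lemma scaleR_mem: "x \<in> B \<Longrightarrow> 0 \<le> c \<Longrightarrow> c \<le> 1 \<Longrightarrow> c *\<^sub>R x \<in> B"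
  using convexD[OF convex, of x 0 c "1 - c"] zero_in_interior interior_subset by auto

lemma gauge_le_iff: assumes "0 < t" shows "g x \<le> t \<longleftrightarrow> (1 / t) *\<^sub>R x \<in> B"
proof
  assume "(1 / t) *\<^sub>R x \<in> B"
  then show "g x \<le> t"
    unfolding gauge_eq_Inf using assms by (intro cInf_lower bdd_belowI[of _ 0]) auto
next
  assume "g x \<le> t"
  have "(1 / s) *\<^sub>R x \<in> B" if "t < s" for s
  proof -
    have "Inf {t. 0 < t \<and> (1 / t) *\<^sub>R x \<in> B} < s"
      using \<open>g x \<le> t\<close> that by (simp add: gauge_eq_Inf)
    then obtain u where u: "0 < u" "(1 / u) *\<^sub>R x \<in> B" "u < s"
      using cInf_lessD[OF gauge_defining_set_nonempty] by blast
    have "(u / s) *\<^sub>R ((1 / u) *\<^sub>R x) \<in> B"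
      using u that by (intro scaleR_mem[OF u(2)]) auto
    with u show ?thesis by simp
  qed
  then have ev: "\<forall>\<^sub>F s in at_right t. (1 / s) *\<^sub>R x \<in> B"
    by (rule eventually_mono[OF eventually_at_right_less])
  have lim: "((\<lambda>s. (1 / s) *\<^sub>R x) \<longlongrightarrow> (1 / t) *\<^sub>R x) (at_right t)"
    using assms by (intro tendsto_scaleR tendsto_divide tendsto_const tendsto_ident_at) auto
  show "(1 / t) *\<^sub>R x \<in> B"
    using Lim_in_closed_set[OF compact_imp_closed[OF compact] ev _ lim] by simp
qed

lemma mem_iff_gauge_le_one: "x \<in> B \<longleftrightarrow> g x \<le> 1"
  using gauge_le_iff[of 1] by simp

lemma gauge_nonneg: "0 \<le> g x"
  unfolding gauge_eq_Inf by (rule cInf_greatest[OF gauge_defining_set_nonempty]) auto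

lemma gauge_scaleR: assumes "0 < c" shows "g (c *\<^sub>R x) = c * g x"
proof -
  have le_iff: "g (c *\<^sub>R x) \<le> t \<longleftrightarrow> c * g x \<le> t" if "0 < t" for t
  proof -
    have "(1 / t) *\<^sub>R (c *\<^sub>R x) = (1 / (t / c)) *\<^sub>R x" using assms by simp
    then have "g (c *\<^sub>R x) \<le> t \<longleftrightarrow> g x \<le> t / c"
      using gauge_le_iff[OF that, of "c *\<^sub>R x"] gauge_le_iff[of "t / c" x] that assms by simp
    also have "\<dots> \<longleftrightarrow> c * g x \<le> t"
      using assms by (simp add: le_divide_eq mult.commute)
    finally show ?thesis .
  qed
  have "g (c *\<^sub>R x) \<le> c * g x"
  proof (rule field_le_epsilon)
    fix e :: real assume "0 < e"
    then have "0 < c * g x + e" using gauge_nonneg[of x] assms by (simp add: add_nonneg_pos)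
    then show "g (c *\<^sub>R x) \<le> c * g x + e" using le_iff[of "c * g x + e"] \<open>0 < e\<close> by simp
  qed
  moreover have "c * g x \<le> g (c *\<^sub>R x)"
  proof (rule field_le_epsilon)
    fix e :: real assume "0 < e"
    then have "0 < g (c *\<^sub>R x) + e" using gauge_nonneg[of "c *\<^sub>R x"] by simp
    then show "c * g x \<le> g (c *\<^sub>R x) + e" using le_iff[of "g (c *\<^sub>R x) + e"] \<open>0 < e\<close> by simp
  qed
  ultimately show ?thesis by simp
qed

lemma gauge_zero [simp]: "g 0 = 0"
  using gauge_scaleR[of 2 0] by simp

lemma norm_le_gauge: obtains R where "0 < R" "\<And>x. norm x \<le> R * g x"
proof -
  obtain R where R: "0 < R" "\<And>x. x \<in> B \<Longrightarrow> norm x \<le> R"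
    using compact_imp_bounded[OF compact] bounded_pos by blast
  have "norm x / R \<le> g x" for x
  proof (rule field_le_epsilon)
    fix e :: real assume "0 < e"
    then have "(1 / (g x + e)) *\<^sub>R x \<in> B"
      using gauge_le_iff[of "g x + e" x] gauge_nonneg[of x] by simp
    then have "norm x / (g x + e) \<le> R"
      using R(2) gauge_nonneg[of x] \<open>0 < e\<close> by fastforce
    then show "norm x / R \<le> g x + e"
      using R(1) gauge_nonneg[of x] \<open>0 < e\<close> by (simp add: divide_le_eq mult.commute)
  qed
  then show ?thesis using that R(1) by (simp add: divide_le_eq mult.commute)
qed

lemma gauge_le_norm: obtains r where "0 < r" "\<And>x. r * g x \<le> norm x"
proof -
  obtain r where r: "0 < r" "cball 0 r \<subseteq> B"
    using zero_in_interior mem_interior_cball by blast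
  have "r * g x \<le> norm x" for x
  proof (cases "x = 0")
    case False
    then have "(1 / (norm x / r)) *\<^sub>R x \<in> cball 0 r" using r(1) by simp
    then have "g x \<le> norm x / r"
      using gauge_le_iff[of "norm x / r" x] r False by auto
    then show ?thesis using r(1) by (simp add: le_divide_eq mult.commute)
  qed simp
  then show ?thesis using that r(1) by blast
qed

lemma gauge_pos: assumes "x \<noteq> 0" shows "0 < g x"
proof -
  obtain R where R: "0 < R" "\<And>x. norm x \<le> R * g x" using norm_le_gauge by blast
  have "0 < norm x" using assms by simp
  also have "\<dots> \<le> R * g x" by (rule R(2))
  finally show ?thesis using R(1) by (simp add: zero_less_mult_iff)
qed

lemma bdd_above_skewness_quotients: "bdd_above {g x / g (- x) | x. x \<noteq> 0}"
proof -
  obtain R where R: "0 < R" "\<And>x. norm x \<le> R * g x" using norm_le_gauge by blast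
  obtain r where r: "0 < r" "\<And>x. r * g x \<le> norm x" using gauge_le_norm by blast
  have "g x / g (- x) \<le> R / r" if "x \<noteq> 0" for x
  proof -
    have "r * g x \<le> R * g (- x)" using r(2)[of x] R(2)[of "- x"] by simp
    then show ?thesis
      using gauge_pos[of "- x"] that r(1) by (simp add: divide_le_eq le_divide_eq mult.commute)
  qed
  then show ?thesis by (intro bdd_aboveI[of _ "R / r"]) auto
qed

lemma gauge_le_skewness_mult: "g x \<le> skewness g * g (- x)"
proof (cases "x = 0")
  case False
  have "g x / g (- x) \<le> skewness g"
    unfolding skewness_def using False by (intro cSup_upper bdd_above_skewness_quotients) auto
  then show ?thesis using gauge_pos[of "- x"] False by (simp add: divide_le_eq mult.commute)
qed simp

lemma skewness_pos: "0 < skewness g"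
proof -
  obtain x :: 'a where "x \<noteq> 0" using nonzero_Basis SOME_Basis by blast
  then have "0 < skewness g * g (- x)"
    using gauge_pos[of x] gauge_le_skewness_mult[of x] by linarith
  then show ?thesis using gauge_nonneg[of "- x"] by (simp add: zero_less_mult_iff)
qed

lemma bdd_above_dual_gauge_set: "bdd_above {p \<bullet> x | x. g x = 1}"
proof -
  obtain R where R: "0 < R" "\<And>x. x \<in> B \<Longrightarrow> norm x \<le> R"
    using compact_imp_bounded[OF compact] bounded_pos by blast
  have "p \<bullet> x \<le> norm p * R" if "g x = 1" for x
  proof -
    have "norm x \<le> R" using R(2) that mem_iff_gauge_le_one by simp
    then show ?thesis
      using norm_cauchy_schwarz[of p x] by (meson mult_left_mono norm_ge_zero order_trans)
  qed
  then show ?thesis by (intro bdd_aboveI[of _ "norm p * R"]) auto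
qed

lemma inner_le_dual_gauge_mult: "p \<bullet> x \<le> dual_gauge g p * g x"
proof (cases "x = 0")
  case False
  define y where "y = (1 / g x) *\<^sub>R x"
  have gx: "0 < g x" using gauge_pos False by simp
  then have "g y = 1" using gauge_scaleR[of "1 / g x" x] by (simp add: y_def)
  then have "p \<bullet> y \<le> dual_gauge g p"
    unfolding dual_gauge_def by (intro cSup_upper bdd_above_dual_gauge_set) auto
  moreover have "p \<bullet> x = g x * (p \<bullet> y)" using gx by (simp add: y_def)
  ultimately show ?thesis using gx by (simp add: mult.commute)
qed simp

lemma dual_gauge_eq_oneI:
  assumes "\<And>x. g x = 1 \<Longrightarrow> p \<bullet> x \<le> 1" and "g w = 1" and "p \<bullet> w = 1"
  shows "dual_gauge g p = 1"
  unfolding dual_gauge_def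
proof (rule cSup_eq_maximum)
  show "1 \<in> {p \<bullet> x | x. g x = 1}" using assms(2,3) by force
  show "z \<le> 1" if "z \<in> {p \<bullet> x | x. g x = 1}" for z
    using that assms(1) by blast
qed

lemma gauge_eq_one_not_interior: assumes "g v = 1" shows "v \<notin> interior B"
proof
  assume "v \<in> interior B"
  then obtain e where e: "0 < e" "cball v e \<subseteq> B" using mem_interior_cball by blast
  have v: "v \<noteq> 0" using assms by auto
  define c where "c = 1 + e / norm v"
  have c: "1 < c" using v e(1) by (simp add: c_def)
  have "dist v (c *\<^sub>R v) = e"
    using v e(1) by (simp add: c_def dist_norm algebra_simps)
  then have "g (c *\<^sub>R v) \<le> 1" using e(2) mem_iff_gauge_le_one by auto
  moreover have "g (c *\<^sub>R v) = c" using gauge_scaleR[of c v] c assms by simp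
  ultimately show False using c by simp
qed

lemma supporting_dual_functional:
  assumes "g v = 1" obtains p where "dual_gauge g p = 1" "p \<bullet> v = 1"
proof -
  have closure: "closure B = B" using compact_imp_closed[OF compact] by simp
  have rel_interior: "rel_interior B = interior B"
    using zero_in_interior rel_interior_nonempty_interior by blast
  have "v \<in> closure B" "v \<notin> rel_interior B"
    using assms mem_iff_gauge_le_one gauge_eq_one_not_interior closure rel_interior by auto
  then obtain a where supp: "\<And>y. y \<in> closure B \<Longrightarrow> a \<bullet> v \<le> a \<bullet> y"
    and strict: "\<And>y. y \<in> rel_interior B \<Longrightarrow> a \<bullet> v < a \<bullet> y"
    using supporting_hyperplane_relative_frontier[OF convex] by metis
  have a: "\<And>y. y \<in> B \<Longrightarrow> a \<bullet> v \<le> a \<bullet> y" "a \<bullet> v < 0"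
    using supp closure strict[of 0] zero_in_interior rel_interior by auto
  define p where "p = (1 / (a \<bullet> v)) *\<^sub>R a"
  have "p \<bullet> y \<le> 1" if "g y = 1" for y
    using a(1)[of y] a(2) that mem_iff_gauge_le_one by (simp add: p_def divide_le_eq)
  moreover have "p \<bullet> v = 1" using a(2) by (simp add: p_def)
  ultimately show ?thesis using that dual_gauge_eq_oneI assms by blast
qed

lemma scaled_subdiff_subset_iff:
  assumes gv: "g v = 1"
  shows "(\<lambda>p. (- (1 / skewness g)) *\<^sub>R p) ` gauge_subdiff g v \<subseteq> gauge_subdiff g (- v)
    \<longleftrightarrow> skewness g * g (- v) = 1" (is "?incl \<longleftrightarrow> _")
proof -
  let ?\<sigma> = "skewness g"
  have \<sigma>: "0 < ?\<sigma>" by (rule skewness_pos)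
  have "v \<noteq> 0" using gv by auto
  then have subdiff_v: "gauge_subdiff g v = {p. dual_gauge g p = 1 \<and> p \<bullet> v = 1}"
    and subdiff_minus_v: "gauge_subdiff g (- v) = {q. dual_gauge g q = 1 \<and> q \<bullet> (- v) = g (- v)}"
    using gv by (simp_all add: gauge_subdiff_def)
  show ?thesis
  proof
    assume ?incl
    obtain p where "dual_gauge g p = 1" "p \<bullet> v = 1" using supporting_dual_functional[OF gv] .
    then have "(- (1 / ?\<sigma>)) *\<^sub>R p \<in> gauge_subdiff g (- v)"
      using \<open>?incl\<close> subdiff_v by blast
    then have "g (- v) = 1 / ?\<sigma>" using subdiff_minus_v \<open>p \<bullet> v = 1\<close> by simp
    then show "?\<sigma> * g (- v) = 1" using \<sigma> by simp
  next
    assume \<sigma>_v: "?\<sigma> * g (- v) = 1"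
    show ?incl
    proof (rule image_subsetI)
      fix p assume "p \<in> gauge_subdiff g v"
      then have p: "dual_gauge g p = 1" "p \<bullet> v = 1" using subdiff_v by auto
      let ?q = "(- (1 / ?\<sigma>)) *\<^sub>R p"
      have "?q \<bullet> x \<le> 1" if "g x = 1" for x
      proof -
        have "p \<bullet> (- x) \<le> g (- x)" using inner_le_dual_gauge_mult[of p "- x"] p by simp
        also have "\<dots> \<le> ?\<sigma>" using gauge_le_skewness_mult[of "- x"] that by simp
        finally show ?thesis using \<sigma> by (simp add: field_simps)
      qed
      moreover have "g (?\<sigma> *\<^sub>R (- v)) = 1" using gauge_scaleR[OF \<sigma>, of "- v"] \<sigma>_v by (simp only:)
      moreover have "?q \<bullet> (?\<sigma> *\<^sub>R (- v)) = 1" using \<sigma> p by simp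
      ultimately have "dual_gauge g ?q = 1" by (rule dual_gauge_eq_oneI)
      moreover have "?q \<bullet> (- v) = g (- v)" using p \<sigma>_v \<sigma> by (simp add: field_simps)
      ultimately show "?q \<in> gauge_subdiff g (- v)" using subdiff_minus_v by simp
    qed
  qed
qed

end

theorem mainTheorem1:
  fixes g :: "'a::euclidean_space \<Rightarrow> real" and v :: 'a
  assumes "is_gauge g"
    and "g v = 1"
  shows "v \<in> skew_dirs g \<longleftrightarrow>
    (\<lambda>p. (- (1 / skewness g)) *\<^sub>R p) ` gauge_subdiff g v \<subseteq> gauge_subdiff g (- v)"
proof -
  obtain B where "convex B" "compact B" "0 \<in> interior B" "g = minkowski_functional B"
    using assms(1) unfolding is_gauge_def by blast
  then interpret minkowski_gauge B g by unfold_locales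
  show ?thesis
    using scaled_subdiff_subset_iff[OF assms(2)] assms(2) by (auto simp: skew_dirs_def)
qed

end
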